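(* Let $\mathbf U$ be a real $3\times3$ positive-definite symmetric matrix, $|\hat{\mathbf e}|=1$, $\hat{\mathbf U}=(-\mathbf I+2\hat{\mathbf e}\otimes\hat{\mathbf e})\mathbf U(-\mathbf I+2\hat{\mathbf e}\otimes\hat{\mathbf e})$, and let $\hat{\mathbf R}\in\mathrm{SO}(3)$, nonzero $\mathbf a,\mathbf n\in\mathbb R^3$ satisfy $\hat{\mathbf R}\hat{\mathbf U}=\mathbf U+\mathbf a\otimes\mathbf n$. Consider the conditions (CC1) the middle eigenvalue $\lambda_2$ of $\mathbf U$ equals $1$; (CC2) $\mathbf a\cdot\mathbf U\,\mathrm{cof}(\mathbf U^2-\mathbf I)\mathbf n=0$; (CC2') $(\mathbf a\cdot\hat{\mathbf v}_2)(\mathbf n\cdot\hat{\mathbf v}_2)=0$, where $\hat{\mathbf v}_2$ is a normalized eigenvector of $\mathbf U$ corresponding to its middle eigenvalue; (CC3) $\mathrm{tr}\,\mathbf U^2-\det\mathbf U^2-\frac{|\mathbf a|^2|\mathbf n|^2}{4}-2\ge0$. Then (CC1), (CC2), (CC3) hold if and only if (CC1), (CC2'), (CC3) hold.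
   Context: $\mathbf a\otimes\mathbf n$ is the matrix $\mathbf x\mapsto(\mathbf n\cdot\mathbf x)\mathbf a$; $\mathrm{cof}\,\mathbf A$ is the cofactor matrix, $(\mathrm{cof}\,\mathbf A)_{ij}=(-1)^{i+j}\det$ of the submatrix obtained by deleting row $i$ and column $j$. *)

theory Defs
  imports "HOL-Analysis.Analysis"
begin

definition outer :: "real^'n \<Rightarrow> real^'m \<Rightarrow> real^'m^'n" where
  "outer a n = (\<chi> i j. a $ i * n $ j)"

text \<open>Position (0,1,2) of an index of the 3-element / 2-element index types.\<close>
definition ix3 :: "3 \<Rightarrow> nat" where "ix3 i = nat (Rep_bit1 i)"
definition ix2 :: "2 \<Rightarrow> nat" where "ix2 k = nat (Rep_bit0 k)"

definition skip :: "nat \<Rightarrow> nat \<Rightarrow> nat" where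
  "skip i k = (if k < i then k else Suc k)"

definition cof :: "real^3^3 \<Rightarrow> real^3^3" where
  "cof A = (\<chi> i j. (-1) ^ (ix3 i + ix3 j) *
      det (\<chi> (k::2) (l::2). A $ of_nat (skip (ix3 i) (ix2 k)) $ of_nat (skip (ix3 j) (ix2 l))))"

definition sym_posdef :: "real^3^3 \<Rightarrow> bool" where
  "sym_posdef U \<longleftrightarrow> transpose U = U \<and> (\<forall>x. x \<noteq> 0 \<longrightarrow> x \<bullet> (U *v x) > 0)"

definition middle_eigenvalue :: "real^3^3 \<Rightarrow> real" where
  "middle_eigenvalue U = (THE l. \<exists>v1 v2 v3 l1 l3.
      norm v1 = 1 \<and> norm v2 = 1 \<and> norm v3 = 1 \<and>
      v1 \<bullet> v2 = 0 \<and> v1 \<bullet> v3 = 0 \<and> v2 \<bullet> v3 = 0 \<and>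
      U *v v1 = l1 *\<^sub>R v1 \<and> U *v v2 = l *\<^sub>R v2 \<and> U *v v3 = l3 *\<^sub>R v3 \<and>
      l1 \<le> l \<and> l \<le> l3)"

end

theory Submission
  imports Defs
begin

text \<open>If \<open>\<lambda>\<^sub>2 = 1\<close>, the unit eigenvector \<open>v\<close> spans the kernel of the symmetric matrix
  \<open>M = U\<^sup>2 - I\<close>, so \<open>cof M = (tr cof M) v \<otimes> v\<close>; as \<open>U v = v\<close> this gives
  \<open>a \<cdot> U cof M n = (tr cof M)(a \<cdot> v)(n \<cdot> v)\<close>. Since \<open>det M = 0\<close>, the trace of the
  cofactor matrix is \<open>det U\<^sup>2 - tr U\<^sup>2 + 2\<close>, which (CC3) bounds above by
  \<open>-|a|\<^sup>2|n|\<^sup>2/4 < 0\<close>.\<close>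

lemma ix3_numerals: "ix3 1 = 1" "ix3 2 = 2" "ix3 3 = 0"
  unfolding ix3_def by (simp_all add: bit1.Rep_1 bit1.Rep_numeral)

lemma ix2_numerals: "ix2 1 = 1" "ix2 2 = 0"
  unfolding ix2_def by (simp_all add: bit0.Rep_1 bit0.Rep_numeral)

lemma numeral_3_wrap: "(0::3) = 3" "(4::3) = 1" "(5::3) = 2"
  by simp_all

lemma cof_3:
  "cof A $ 1 $ 1 = A$2$2 * A$3$3 - A$2$3 * A$3$2"
  "cof A $ 1 $ 2 = A$2$3 * A$3$1 - A$2$1 * A$3$3"
  "cof A $ 1 $ 3 = A$2$1 * A$3$2 - A$2$2 * A$3$1"
  "cof A $ 2 $ 1 = A$1$3 * A$3$2 - A$1$2 * A$3$3"
  "cof A $ 2 $ 2 = A$1$1 * A$3$3 - A$1$3 * A$3$1"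
  "cof A $ 2 $ 3 = A$1$2 * A$3$1 - A$1$1 * A$3$2"
  "cof A $ 3 $ 1 = A$1$2 * A$2$3 - A$1$3 * A$2$2"
  "cof A $ 3 $ 2 = A$1$3 * A$2$1 - A$1$1 * A$2$3"
  "cof A $ 3 $ 3 = A$1$1 * A$2$2 - A$1$2 * A$2$1"
  by (simp_all add: cof_def ix3_numerals ix2_numerals skip_def det_2 numeral_3_wrap algebra_simps)

lemma trace_cof_diff_mat1: "trace (cof (A - mat 1)) = det A - trace A + 2 - det (A - mat 1)"
  by (simp add: trace_def sum_3 cof_3 det_3 mat_def algebra_simps)

lemma outer_mult_vec: "outer a n *v x = (n \<bullet> x) *\<^sub>R a"
  by (simp add: outer_def vec_eq_iff matrix_vector_mult_def inner_vec_def
      mult.commute mult.left_commute sum_distrib_left)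

text \<open>The columns of \<open>cof M\<close> lie in \<open>ker M\<close> because \<open>M (cof M)\<^sup>T = (det M) I = 0\<close>; if
  the kernel is larger than \<open>span v\<close>, both sides vanish.\<close>
lemma cof_symmetric_kernel:
  fixes M :: "real^3^3"
  assumes sym: "transpose M = M" and kernel: "M *v v = 0" and unit: "v \<bullet> v = 1"
  shows "cof M = trace (cof M) *\<^sub>R outer v v"
proof -
  have "M $ i $ j = M $ j $ i" for i j
    using arg_cong[OF sym, of "\<lambda>A. A $ j $ i"] by (simp add: transpose_def)
  then have M_sym: "M$2$1 = M$1$2" "M$3$1 = M$1$3" "M$3$2 = M$2$3"
    by blast+
  have "(M *v v)$1 = 0" "(M *v v)$2 = 0" "(M *v v)$3 = 0"
    using kernel by simp_all
  then have rows: "M$1$1 * v$1 + M$1$2 * v$2 + M$1$3 * v$3 = 0"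
      "M$1$2 * v$1 + M$2$2 * v$2 + M$2$3 * v$3 = 0"
      "M$1$3 * v$1 + M$2$3 * v$2 + M$3$3 * v$3 = 0"
    by (simp_all add: matrix_vector_mult_def sum_3 M_sym)
  have "v$1 * v$1 + v$2 * v$2 + v$3 * v$3 = 1"
    using unit by (simp add: inner_vec_def sum_3)
  note kernel_eqs = rows this
  have trace: "trace (cof M) = (M$2$2 * M$3$3 - M$2$3 * M$2$3) + (M$1$1 * M$3$3 - M$1$3 * M$1$3)
      + (M$1$1 * M$2$2 - M$1$2 * M$1$2)"
    by (simp add: trace_def sum_3 cof_3 M_sym)
  have "cof M $ 1 $ 1 = trace (cof M) * (v$1 * v$1)" "cof M $ 1 $ 2 = trace (cof M) * (v$1 * v$2)"
    "cof M $ 1 $ 3 = trace (cof M) * (v$1 * v$3)" "cof M $ 2 $ 1 = trace (cof M) * (v$2 * v$1)"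
    "cof M $ 2 $ 2 = trace (cof M) * (v$2 * v$2)" "cof M $ 2 $ 3 = trace (cof M) * (v$2 * v$3)"
    "cof M $ 3 $ 1 = trace (cof M) * (v$3 * v$1)" "cof M $ 3 $ 2 = trace (cof M) * (v$3 * v$2)"
    "cof M $ 3 $ 3 = trace (cof M) * (v$3 * v$3)"
    unfolding trace cof_3 M_sym using kernel_eqs by algebra+
  then show ?thesis
    by (simp add: vec_eq_iff forall_3 outer_def)
qed

lemma det_eq_0_if_kernel:
  fixes M :: "'a::field^'n^'n"
  assumes "M *v v = 0" and "v \<noteq> 0"
  shows "det M = 0"
  using assms inj_matrix_vector_mult[of M] invertible_det_nz[of M]
  by (metis injD matrix_vector_mult_0_right)

lemma inner_cof_square_diff_mat1:
  fixes U :: "real^3^3"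
  assumes sym: "transpose U = U" and fixed: "U *v v = v" and unit: "v \<bullet> v = 1"
  shows "a \<bullet> ((U ** cof (U ** U - mat 1)) *v n)
    = (det (U ** U) - trace (U ** U) + 2) * ((a \<bullet> v) * (n \<bullet> v))"
proof -
  define M where "M = U ** U - mat 1"
  have "transpose (U ** U) = U ** U"
    by (simp add: matrix_transpose_mul sym)
  then have "transpose M = M"
    by (simp add: M_def transpose_def vec_eq_iff mat_def)
  moreover have kernel: "M *v v = 0"
    by (simp add: M_def matrix_vector_mult_diff_rdistrib matrix_vector_mul_assoc[symmetric] fixed)
  ultimately have cof_M: "cof M = trace (cof M) *\<^sub>R outer v v"
    using cof_symmetric_kernel unit by blast
  have "det M = 0"
    using det_eq_0_if_kernel[OF kernel] unit by (metis inner_zero_left zero_neq_one)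
  then have "trace (cof M) = det (U ** U) - trace (U ** U) + 2"
    using trace_cof_diff_mat1[of "U ** U"] by (simp add: M_def)
  moreover have "cof M *v n = (trace (cof M) * (v \<bullet> n)) *\<^sub>R v"
    by (subst cof_M) (simp add: outer_mult_vec flip: scaleR_matrix_vector_assoc)
  then have "a \<bullet> ((U ** cof M) *v n) = trace (cof M) * ((a \<bullet> v) * (n \<bullet> v))"
    by (simp add: matrix_vector_mul_assoc[symmetric] matrix_vector_mult_scaleR fixed inner_commute)
  ultimately show ?thesis
    by (simp add: M_def)
qed

theorem corollary3:
  fixes U R :: "real^3^3" and e a n v2 :: "real^3"
  assumes "sym_posdef U"
    and "norm e = 1"
    and "rotation_matrix R"
    and "a \<noteq> 0" and "n \<noteq> 0"
    and "R ** ((- mat 1 + 2 *\<^sub>R outer e e) ** U ** (- mat 1 + 2 *\<^sub>R outer e e)) = U + outer a n"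
    and "norm v2 = 1" and "U *v v2 = middle_eigenvalue U *\<^sub>R v2"
  shows "(middle_eigenvalue U = 1 \<and>
          a \<bullet> ((U ** cof (U ** U - mat 1)) *v n) = 0 \<and>
          trace (U ** U) - det (U ** U) - (norm a)^2 * (norm n)^2 / 4 - 2 \<ge> 0)
     \<longleftrightarrow> (middle_eigenvalue U = 1 \<and>
          (a \<bullet> v2) * (n \<bullet> v2) = 0 \<and>
          trace (U ** U) - det (U ** U) - (norm a)^2 * (norm n)^2 / 4 - 2 \<ge> 0)"
proof -
  have "a \<bullet> ((U ** cof (U ** U - mat 1)) *v n) = 0 \<longleftrightarrow> (a \<bullet> v2) * (n \<bullet> v2) = 0"
    if "middle_eigenvalue U = 1"
      and CC3: "trace (U ** U) - det (U ** U) - (norm a)^2 * (norm n)^2 / 4 - 2 \<ge> 0"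
  proof -
    have "(norm a)^2 * (norm n)^2 > 0"
      using \<open>a \<noteq> 0\<close> \<open>n \<noteq> 0\<close> by simp
    then have "det (U ** U) - trace (U ** U) + 2 \<noteq> 0"
      using CC3 by linarith
    moreover have "transpose U = U" "U *v v2 = v2" "v2 \<bullet> v2 = 1"
      using assms(1,7,8) that(1) by (simp_all add: sym_posdef_def norm_eq_1)
    ultimately show ?thesis
      by (simp add: inner_cof_square_diff_mat1)
  qed
  then show ?thesis by blast
qed

end
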